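(* Let $d\ge2$ and $\gamma^\mu\in\mathbb{S}^d$ with zero diagonal and $\gamma^\mu_{ij}>0$ for all $i\ne j$, and set $\gamma^\ast=\min_{i\ne j}\gamma^\mu_{ij}$. For $\mu\in\Delta^d$ let $\widetilde{c}^\mu$ be as defined in the context and let $\widetilde{a}^\mu$ be the same matrix with $\gamma^\mu_{ij}$ replaced by $1$ for all $i\ne j$. Then $\widetilde{c}^\mu-\gamma^\ast\widetilde{a}^\mu$ is positive semidefinite, and $\mathrm{rk}(\widetilde{c}^\mu)=\mathrm{rk}(\widetilde{a}^\mu)$.
   Context: $\Delta^d$ is the unit simplex. For $\mu\in\Delta^d$ and $\gamma\in\mathbb{S}^d$ with zero diagonal, $c\in\mathbb{S}^d$ is given by $c_{ii}=\sum_{j\ne i}\gamma_{ij}\mu^i\mu^j$, $c_{ij}=-\gamma_{ij}\mu^i\mu^j$ ($i\ne j$); $\widetilde{c}^\mu$ denotes this matrix for $\gamma=\gamma^\mu$ with the $d$-th row and column deleted. *)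

theory Defs
  imports "Jordan_Normal_Form.DL_Rank"
begin

text \<open>Indices are 0-based: 0..d-1. The d-th row/column is index d-1.\<close>

definition unit_simplex :: "nat \<Rightarrow> (nat \<Rightarrow> real) set" where
  "unit_simplex d = {\<mu>. (\<forall>i<d. 0 \<le> \<mu> i) \<and> (\<Sum>i<d. \<mu> i) = 1}"

definition c_mat :: "nat \<Rightarrow> (nat \<Rightarrow> nat \<Rightarrow> real) \<Rightarrow> (nat \<Rightarrow> real) \<Rightarrow> real mat" where
  "c_mat d \<gamma> \<mu> = mat d d (\<lambda>(i,j). if i = j then (\<Sum>k\<in>{..<d} - {i}. \<gamma> i k * \<mu> i * \<mu> k)
                                    else - \<gamma> i j * \<mu> i * \<mu> j)"

definition c_tilde :: "nat \<Rightarrow> (nat \<Rightarrow> nat \<Rightarrow> real) \<Rightarrow> (nat \<Rightarrow> real) \<Rightarrow> real mat" where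
  "c_tilde d \<gamma> \<mu> = mat (d - 1) (d - 1) (\<lambda>(i,j). c_mat d \<gamma> \<mu> $$ (i,j))"

definition ones_offdiag :: "nat \<Rightarrow> nat \<Rightarrow> real" where
  "ones_offdiag i j = (if i = j then 0 else 1)"

definition psd :: "nat \<Rightarrow> real mat \<Rightarrow> bool" where
  "psd n M \<longleftrightarrow> M \<in> carrier_mat n n \<and> M\<^sup>T = M \<and> (\<forall>v \<in> carrier_vec n. 0 \<le> v \<bullet> (M *\<^sub>v v))"

end

theory Submission
  imports Defs "Jordan_Normal_Form.Matrix_Kernel"
begin

text \<open>Pad \<open>v\<close> with a zero in the deleted coordinate to get \<open>w\<close>. The quadratic form of
  \<open>c_tilde d \<gamma> \<mu>\<close> at \<open>v\<close> is then the weighted Dirichlet form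
  \<open>(\<Sum>i j. \<gamma> i j * \<mu> i * \<mu> j * (w i - w j)\<^sup>2) / 2\<close>. It is linear in \<open>\<gamma>\<close>, so the form of
  \<open>c_tilde d \<gamma> \<mu> - \<gamma>\<^sup>* \<cdot> c_tilde d ones_offdiag \<mu>\<close> has the weights \<open>\<gamma> i j - \<gamma>\<^sup>* \<ge> 0\<close>.
  For strictly positive weights, \<open>c_tilde d \<gamma> \<mu> *\<^sub>v v = 0\<close> forces the form to vanish, hence
  \<open>\<mu> i * \<mu> j * (w i - w j) = 0\<close> for all \<open>i, j\<close>; conversely this condition annihilates every
  entry of \<open>c_tilde d \<gamma> \<mu> *\<^sub>v v\<close>. So the kernel does not depend on the weights, and
  rank-nullity gives equal ranks.\<close>

lemma rank_plus_kernel_dim: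
  fixes A :: "'a::field mat"
  assumes A: "A \<in> carrier_mat n n"
  shows "vec_space.rank n A + kernel_dim A = n"
proof -
  interpret vec_space "TYPE('a)" n .
  interpret K: kernel n n A using A by unfold_locales
  interpret lm: linear_map class_ring V V "\<lambda>v. A *\<^sub>v v"
  proof unfold_locales
    show "(*\<^sub>v) A \<in> LinearCombinations.module_hom class_ring V V"
      unfolding LinearCombinations.module_hom_def
      using A by (auto simp: mult_add_distrib_mat_vec mult_mat_vec)
  qed
  have im: "lm.imT = span (set (cols A))"
    using col_space_eq[OF A] A unfolding col_space_def lm.im_def by auto
  have ker: "lm.kerT = mat_kernel A"
    using A unfolding lm.ker_def mat_kernel_def by auto
  have "vectorspace.dim class_ring (vs lm.imT) + vectorspace.dim class_ring (vs lm.kerT) = dim"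
    by (rule lm.rank_nullity_main(1)) simp
  then show ?thesis
    unfolding im ker dim_is_n rank_def K.kernel_dim by simp
qed

lemma rank_eq_if_mat_kernel_eq:
  fixes A B :: "'a::field mat"
  assumes "A \<in> carrier_mat n n" "B \<in> carrier_mat n n" "mat_kernel A = mat_kernel B"
  shows "vec_space.rank n A = vec_space.rank n B"
proof -
  have "kernel_dim A = kernel_dim B"
    using assms unfolding kernel_dim_def by simp
  then show ?thesis
    using rank_plus_kernel_dim[OF assms(1)] rank_plus_kernel_dim[OF assms(2)] by simp
qed

definition extend_by_zero :: "nat \<Rightarrow> 'a::zero vec \<Rightarrow> nat \<Rightarrow> 'a" where
  "extend_by_zero n v i = (if i < n then v $ i else 0)"

lemma dim_row_c_tilde [simp]: "dim_row (c_tilde d g \<mu>) = d - 1"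
  and dim_col_c_tilde [simp]: "dim_col (c_tilde d g \<mu>) = d - 1"
  by (simp_all add: c_tilde_def)

lemma c_tilde_carrier_mat: "c_tilde d g \<mu> \<in> carrier_mat (d - 1) (d - 1)"
  by (simp add: carrier_matI)

lemma sum_extend_by_zero:
  fixes f :: "nat \<Rightarrow> 'a::semiring_0"
  assumes "n \<le> m"
  shows "(\<Sum>i<n. f i * extend_by_zero n v i) = (\<Sum>i<m. f i * extend_by_zero n v i)"
  using assms by (intro sum.mono_neutral_left) (auto simp: extend_by_zero_def)

lemma c_tilde_mult_vec_index:
  assumes v: "v \<in> carrier_vec (d - 1)" and i: "i < d - 1"
  defines "w \<equiv> extend_by_zero (d - 1) v"
  shows "(c_tilde d g \<mu> *\<^sub>v v) $ i = (\<Sum>j<d. g i j * \<mu> i * \<mu> j * (w i - w j))"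
proof -
  let ?c = "\<lambda>j. c_mat d g \<mu> $$ (i, j)"
  have "(c_tilde d g \<mu> *\<^sub>v v) $ i = (\<Sum>j<d - 1. ?c j * v $ j)"
    using v i by (simp add: c_tilde_def mult_mat_vec_def scalar_prod_def lessThan_atLeast0 mult.commute)
  also have "\<dots> = (\<Sum>j<d - 1. ?c j * w j)"
    by (rule sum.cong) (auto simp: w_def extend_by_zero_def)
  also have "\<dots> = (\<Sum>j<d. ?c j * w j)"
    unfolding w_def by (rule sum_extend_by_zero) simp
  also have "\<dots> = ?c i * w i + (\<Sum>j\<in>{..<d} - {i}. ?c j * w j)"
    using i by (subst sum.remove[of _ i]) auto
  also have "\<dots> = (\<Sum>j\<in>{..<d} - {i}. g i j * \<mu> i * \<mu> j * w i)
      - (\<Sum>j\<in>{..<d} - {i}. g i j * \<mu> i * \<mu> j * w j)"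
    using i by (simp add: c_mat_def sum_distrib_right sum_negf)
  also have "\<dots> = (\<Sum>j<d. g i j * \<mu> i * \<mu> j * (w i - w j))"
    using i by (subst (2) sum.remove[of _ i]) (auto simp: sum_subtractf[symmetric] algebra_simps)
  finally show ?thesis .
qed

lemma c_tilde_quadratic_form:
  assumes v: "v \<in> carrier_vec (d - 1)" and sym: "\<forall>i<d. \<forall>j<d. g i j = g j i"
  defines "w \<equiv> extend_by_zero (d - 1) v"
  shows "v \<bullet> (c_tilde d g \<mu> *\<^sub>v v) = (\<Sum>i<d. \<Sum>j<d. g i j * \<mu> i * \<mu> j * (w i - w j)\<^sup>2) / 2"
proof -
  define f where "f i j = g i j * \<mu> i * \<mu> j * w i * (w i - w j)" for i j
  have "dim_vec (c_tilde d g \<mu> *\<^sub>v v) = d - 1"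
    by simp
  then have "v \<bullet> (c_tilde d g \<mu> *\<^sub>v v) = (\<Sum>i<d - 1. (\<Sum>j<d. g i j * \<mu> i * \<mu> j * (w i - w j)) * w i)"
    unfolding scalar_prod_def lessThan_atLeast0[symmetric]
    by (intro sum.cong)
      (auto simp del: index_mult_mat_vec simp: c_tilde_mult_vec_index[OF v] w_def extend_by_zero_def)
  also have "\<dots> = (\<Sum>i<d. (\<Sum>j<d. g i j * \<mu> i * \<mu> j * (w i - w j)) * w i)"
    unfolding w_def by (rule sum_extend_by_zero) simp
  also have "\<dots> = (\<Sum>i<d. \<Sum>j<d. f i j)"
    by (simp add: f_def sum_distrib_left sum_distrib_right algebra_simps)
  finally have "v \<bullet> (c_tilde d g \<mu> *\<^sub>v v) = (\<Sum>i<d. \<Sum>j<d. f i j + f j i) / 2"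
    by (simp add: sum.distrib sum.swap[of f])
  also have "\<dots> = (\<Sum>i<d. \<Sum>j<d. g i j * \<mu> i * \<mu> j * (w i - w j)\<^sup>2) / 2"
    using sym by (intro arg_cong[where f = "\<lambda>x. x / 2"] sum.cong refl)
      (auto simp: f_def power2_eq_square algebra_simps)
  finally show ?thesis .
qed

lemma c_tilde_quadratic_form_nonneg:
  assumes v: "v \<in> carrier_vec (d - 1)"
    and sym: "\<forall>i<d. \<forall>j<d. g i j = g j i"
    and g: "\<forall>i<d. \<forall>j<d. i \<noteq> j \<longrightarrow> 0 \<le> g i j"
    and \<mu>: "\<forall>i<d. 0 \<le> \<mu> i"
  shows "0 \<le> v \<bullet> (c_tilde d g \<mu> *\<^sub>v v)"
  unfolding c_tilde_quadratic_form[OF v sym]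
proof (intro divide_nonneg_pos sum_nonneg)
  fix i j assume "i \<in> {..<d}" "j \<in> {..<d}"
  then show "0 \<le> g i j * \<mu> i * \<mu> j * (extend_by_zero (d - 1) v i - extend_by_zero (d - 1) v j)\<^sup>2"
    using g \<mu> by (cases "i = j") auto
qed simp

lemma c_tilde_quadratic_form_eq_0_iff:
  assumes v: "v \<in> carrier_vec (d - 1)"
    and sym: "\<forall>i<d. \<forall>j<d. g i j = g j i"
    and g: "\<forall>i<d. \<forall>j<d. i \<noteq> j \<longrightarrow> 0 < g i j"
    and \<mu>: "\<forall>i<d. 0 \<le> \<mu> i"
  defines "w \<equiv> extend_by_zero (d - 1) v"
  shows "v \<bullet> (c_tilde d g \<mu> *\<^sub>v v) = 0 \<longleftrightarrow> (\<forall>i<d. \<forall>j<d. \<mu> i * \<mu> j * (w i - w j) = 0)"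
proof -
  define t where "t = (\<lambda>(i, j). g i j * \<mu> i * \<mu> j * (w i - w j)\<^sup>2)"
  have t_nonneg: "0 \<le> t (i, j)" if "i < d" "j < d" for i j
    using g \<mu> that by (cases "i = j") (auto simp: t_def less_imp_le)
  have t_eq_0: "t (i, j) = 0 \<longleftrightarrow> \<mu> i * \<mu> j * (w i - w j) = 0" if "i < d" "j < d" for i j
  proof (cases "i = j")
    case False
    then have "g i j \<noteq> 0" using g that by fastforce
    then show ?thesis by (simp add: t_def)
  qed (simp add: t_def)
  have "v \<bullet> (c_tilde d g \<mu> *\<^sub>v v) = sum t ({..<d} \<times> {..<d}) / 2"
    unfolding c_tilde_quadratic_form[OF v sym] w_def t_def by (simp add: sum.cartesian_product)
  moreover have "sum t ({..<d} \<times> {..<d}) = 0 \<longleftrightarrow> (\<forall>p \<in> {..<d} \<times> {..<d}. t p = 0)"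
    by (rule sum_nonneg_eq_0_iff) (auto intro: t_nonneg)
  ultimately show ?thesis
    using t_eq_0 by auto
qed

lemma c_tilde_mult_vec_eq_0_iff:
  assumes v: "v \<in> carrier_vec (d - 1)"
    and sym: "\<forall>i<d. \<forall>j<d. g i j = g j i"
    and g: "\<forall>i<d. \<forall>j<d. i \<noteq> j \<longrightarrow> 0 < g i j"
    and \<mu>: "\<forall>i<d. 0 \<le> \<mu> i"
  defines "w \<equiv> extend_by_zero (d - 1) v"
  shows "c_tilde d g \<mu> *\<^sub>v v = 0\<^sub>v (d - 1) \<longleftrightarrow> (\<forall>i<d. \<forall>j<d. \<mu> i * \<mu> j * (w i - w j) = 0)"
proof
  assume "c_tilde d g \<mu> *\<^sub>v v = 0\<^sub>v (d - 1)"
  then have "v \<bullet> (c_tilde d g \<mu> *\<^sub>v v) = 0" using v by simp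
  then show "\<forall>i<d. \<forall>j<d. \<mu> i * \<mu> j * (w i - w j) = 0"
    using c_tilde_quadratic_form_eq_0_iff[OF v sym g \<mu>] unfolding w_def by blast
next
  assume H: "\<forall>i<d. \<forall>j<d. \<mu> i * \<mu> j * (w i - w j) = 0"
  have "(c_tilde d g \<mu> *\<^sub>v v) $ i = 0" if i: "i < d - 1" for i
  proof -
    have "(c_tilde d g \<mu> *\<^sub>v v) $ i = (\<Sum>j<d. g i j * (\<mu> i * \<mu> j * (w i - w j)))"
      unfolding c_tilde_mult_vec_index[OF v i] w_def by (simp add: mult.assoc)
    also have "\<dots> = 0" using H i by (intro sum.neutral) (simp del: mult_eq_0_iff)
    finally show ?thesis .
  qed
  then show "c_tilde d g \<mu> *\<^sub>v v = 0\<^sub>v (d - 1)"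
    by (intro eq_vecI) auto
qed

lemma transpose_c_tilde:
  assumes "\<forall>i<d. \<forall>j<d. g i j = g j i"
  shows "(c_tilde d g \<mu>)\<^sup>T = c_tilde d g \<mu>"
  by (rule eq_matI) (auto simp: c_tilde_def c_mat_def assms)

lemma c_tilde_diff_smult:
  "c_tilde d g \<mu> - s \<cdot>\<^sub>m c_tilde d h \<mu> = c_tilde d (\<lambda>i j. g i j - s * h i j) \<mu>"
  by (rule eq_matI) (auto simp: c_tilde_def c_mat_def sum_subtractf sum_distrib_left algebra_simps)

theorem mainTheorem17:
  fixes d :: nat and \<gamma> :: "nat \<Rightarrow> nat \<Rightarrow> real" and \<mu> :: "nat \<Rightarrow> real"
  assumes "d \<ge> 2"
    and "\<forall>i<d. \<forall>j<d. \<gamma> i j = \<gamma> j i"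
    and "\<forall>i<d. \<gamma> i i = 0"
    and "\<forall>i<d. \<forall>j<d. i \<noteq> j \<longrightarrow> \<gamma> i j > 0"
    and "\<gamma>s = Min {\<gamma> i j | i j. i < d \<and> j < d \<and> i \<noteq> j}"
    and "\<mu> \<in> unit_simplex d"
  shows "psd (d - 1) (c_tilde d \<gamma> \<mu> - \<gamma>s \<cdot>\<^sub>m c_tilde d ones_offdiag \<mu>)
    \<and> vec_space.rank (d - 1) (c_tilde d \<gamma> \<mu>) = vec_space.rank (d - 1) (c_tilde d ones_offdiag \<mu>)"
proof -
  have \<mu>: "\<forall>i<d. 0 \<le> \<mu> i" using assms(6) by (simp add: unit_simplex_def)
  have "finite {\<gamma> i j | i j. i < d \<and> j < d \<and> i \<noteq> j}"
    by (rule finite_subset[of _ "case_prod \<gamma> ` ({..<d} \<times> {..<d})"]) auto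
  then have "\<gamma>s \<le> \<gamma> i j" if "i < d" "j < d" "i \<noteq> j" for i j
    unfolding assms(5) using that by (intro Min_le) auto
  then have "psd (d - 1) (c_tilde d (\<lambda>i j. \<gamma> i j - \<gamma>s * ones_offdiag i j) \<mu>)"
    unfolding psd_def using assms(2) \<mu>
    by (intro conjI ballI c_tilde_carrier_mat transpose_c_tilde c_tilde_quadratic_form_nonneg)
      (auto simp: ones_offdiag_def)
  moreover have "mat_kernel (c_tilde d \<gamma> \<mu>) = mat_kernel (c_tilde d ones_offdiag \<mu>)"
    using c_tilde_mult_vec_eq_0_iff[OF _ assms(2,4) \<mu>]
      c_tilde_mult_vec_eq_0_iff[of _ d ones_offdiag, OF _ _ _ \<mu>]
    by (auto simp: mat_kernel_def ones_offdiag_def)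
  then have "vec_space.rank (d - 1) (c_tilde d \<gamma> \<mu>) = vec_space.rank (d - 1) (c_tilde d ones_offdiag \<mu>)"
    by (intro rank_eq_if_mat_kernel_eq c_tilde_carrier_mat)
  ultimately show ?thesis by (simp add: c_tilde_diff_smult)
qed

end
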